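(* Under the standing assumptions below, one of the following holds: (II') there exist maps $h_1:M\to M'$ and $p_1:N\to N'$ such that for all $m\in M$, $n\in N$: $\phi\left(\left[\begin{smallmatrix} 0 & m\\ 0 & 1\end{smallmatrix}\right]\right)=\left[\begin{smallmatrix} 0 & h_1(m)\\ p_1(0) & 1\end{smallmatrix}\right]$ and $\phi\left(\left[\begin{smallmatrix} 0 & 0\\ n & 1\end{smallmatrix}\right]\right)=\left[\begin{smallmatrix} 0 & h_1(0)\\ p_1(n) & 1\end{smallmatrix}\right]$; (II'') there exist maps $h_2:N\to M'$ and $p_2:M\to N'$ such that for all $m\in M$, $n\in N$: $\phi\left(\left[\begin{smallmatrix} 0 & m\\ 0 & 1\end{smallmatrix}\right]\right)=\left[\begin{smallmatrix} 1 & h_2(0)\\ p_2(m) & 0\end{smallmatrix}\right]$ and $\phi\left(\left[\begin{smallmatrix} 0 & 0\\ n & 1\end{smallmatrix}\right]\right)=\left[\begin{smallmatrix} 1 & h_2(n)\\ p_2(0) & 0\end{smallmatrix}\right]$.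
   Context: All rings have an identity $1\neq 0$. Standing assumptions: $R,S,R',S'$ are rings whose only idempotents are $0$ and $1$; $M$ is an $R$-$S$-bimodule, $N$ an $S$-$R$-bimodule, $M'$ an $R'$-$S'$-bimodule, $N'$ an $S'$-$R'$-bimodule; $T=\left[\begin{smallmatrix} R & M\\ N & S\end{smallmatrix}\right]$ and $T'=\left[\begin{smallmatrix} R' & M'\\ N' & S'\end{smallmatrix}\right]$ are the Morita context rings with both Morita maps zero, i.e. the sets of formal matrices with entrywise addition and product $\left[\begin{smallmatrix} r & m\\ n & s\end{smallmatrix}\right]\left[\begin{smallmatrix} r' & m'\\ n' & s'\end{smallmatrix}\right]=\left[\begin{smallmatrix} rr' & rm'+ms'\\ nr'+sn' & ss'\end{smallmatrix}\right]$; and $\phi:T\to T'$ is a ring isomorphism. *)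

theory Defs
  imports Main
begin

text \<open>Rings are modelled by types of class ring_1 (which includes 1 \<noteq> 0).
  An R-S-bimodule M is an abelian group type 'm with a left R-action and
  a right S-action satisfying the usual axioms.\<close>

definition only_trivial_idempotents :: "'a::ring_1 itself \<Rightarrow> bool" where
  "only_trivial_idempotents _ \<longleftrightarrow> (\<forall>x::'a. x * x = x \<longrightarrow> x = 0 \<or> x = 1)"

definition bimodule ::
  "('r::ring_1 \<Rightarrow> 'm::ab_group_add \<Rightarrow> 'm) \<Rightarrow> ('m \<Rightarrow> 's::ring_1 \<Rightarrow> 'm) \<Rightarrow> bool" where
  "bimodule lact ract \<longleftrightarrow>
     (\<forall>a b x. lact (a + b) x = lact a x + lact b x) \<and>
     (\<forall>a x y. lact a (x + y) = lact a x + lact a y) \<and>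
     (\<forall>a b x. lact (a * b) x = lact a (lact b x)) \<and>
     (\<forall>x. lact 1 x = x) \<and>
     (\<forall>x s t. ract x (s + t) = ract x s + ract x t) \<and>
     (\<forall>x y s. ract (x + y) s = ract x s + ract y s) \<and>
     (\<forall>x s t. ract x (s * t) = ract (ract x s) t) \<and>
     (\<forall>x. ract x 1 = x) \<and>
     (\<forall>a x s. lact a (ract x s) = ract (lact a x) s)"

text \<open>Formal 2x2 matrices [r m; n s] of the Morita context ring with zero Morita maps.\<close>
datatype ('r, 'm, 'n, 's) mat2 = Mat 'r 'm 'n 's

fun madd :: "('r::plus, 'm::plus, 'n::plus, 's::plus) mat2 \<Rightarrow> ('r, 'm, 'n, 's) mat2 \<Rightarrow> ('r, 'm, 'n, 's) mat2" where
  "madd (Mat r m n s) (Mat r' m' n' s') = Mat (r + r') (m + m') (n + n') (s + s')"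

text \<open>Product: [r m; n s][r' m'; n' s'] = [rr', rm' + ms'; nr' + sn', ss'].
  Parameters: lM (left R-action on M), rM (right S-action on M),
  lN (left S-action on N), rN (right R-action on N).\<close>
fun mmul :: "('r \<Rightarrow> 'm \<Rightarrow> 'm) \<Rightarrow> ('m \<Rightarrow> 's \<Rightarrow> 'm) \<Rightarrow> ('s \<Rightarrow> 'n \<Rightarrow> 'n) \<Rightarrow> ('n \<Rightarrow> 'r \<Rightarrow> 'n)
   \<Rightarrow> ('r::times, 'm::plus, 'n::plus, 's::times) mat2 \<Rightarrow> ('r, 'm, 'n, 's) mat2 \<Rightarrow> ('r, 'm, 'n, 's) mat2" where
  "mmul lM rM lN rN (Mat r m n s) (Mat r' m' n' s') =
     Mat (r * r') (lM r m' + rM m s') (rN n r' + lN s n') (s * s')"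

definition mone :: "('r::one, 'm::zero, 'n::zero, 's::one) mat2" where
  "mone = Mat 1 0 0 1"

definition ring_iso_mat ::
  "('r \<Rightarrow> 'm \<Rightarrow> 'm) \<Rightarrow> ('m \<Rightarrow> 's \<Rightarrow> 'm) \<Rightarrow> ('s \<Rightarrow> 'n \<Rightarrow> 'n) \<Rightarrow> ('n \<Rightarrow> 'r \<Rightarrow> 'n) \<Rightarrow>
   ('r2 \<Rightarrow> 'm2 \<Rightarrow> 'm2) \<Rightarrow> ('m2 \<Rightarrow> 's2 \<Rightarrow> 'm2) \<Rightarrow> ('s2 \<Rightarrow> 'n2 \<Rightarrow> 'n2) \<Rightarrow> ('n2 \<Rightarrow> 'r2 \<Rightarrow> 'n2) \<Rightarrow>
   (('r::ring_1, 'm::ab_group_add, 'n::ab_group_add, 's::ring_1) mat2 \<Rightarrow>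
    ('r2::ring_1, 'm2::ab_group_add, 'n2::ab_group_add, 's2::ring_1) mat2) \<Rightarrow> bool" where
  "ring_iso_mat lM rM lN rN lM' rM' lN' rN' \<phi> \<longleftrightarrow>
     bij \<phi> \<and>
     (\<forall>x y. \<phi> (madd x y) = madd (\<phi> x) (\<phi> y)) \<and>
     (\<forall>x y. \<phi> (mmul lM rM lN rN x y) = mmul lM' rM' lN' rN' (\<phi> x) (\<phi> y)) \<and>
     \<phi> mone = mone"

end

theory Submission
  imports Defs
begin

(* In T the matrix E = [0 0; 0 1] is an idempotent different from 0 and 1,
   and for every m, n the matrices X m = [0 m; 0 1] and Y n = [0 0; n 1] satisfy
     (X m) E = X m,  E (X m) = E,   (Y n) E = E,  E (Y n) = Y n.
   Since phi is a ring isomorphism, phi E is again an idempotent of T' different from 0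
   and 1, and the relations above are transported by phi.  Because R' and S' have only
   trivial idempotents, a proper idempotent of T' has diagonal (0,1) or (1,0).  In either
   case the transported relations pin down every entry of phi (X m) and phi (Y n) except one
   off-diagonal entry, which gives the maps h and p of (II') respectively (II''). *)

lemma bimodule_zero_one_laws:
  assumes "bimodule l r"
  shows "l a 0 = 0" "l 0 x = 0" "r 0 s = 0" "r x 0 = 0" "l 1 x = x" "r x 1 = x"
proof -
  have laws: "\<forall>a b x. l (a + b) x = l a x + l b x" "\<forall>a x y. l a (x + y) = l a x + l a y"
    "\<forall>x s t. r x (s + t) = r x s + r x t" "\<forall>x y s. r (x + y) s = r x s + r y s"
    "\<forall>x. l 1 x = x" "\<forall>x. r x 1 = x"
    using assms unfolding bimodule_def by auto
  have "l a (0 + 0) = l a 0 + l a 0" using laws by blast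
  then show "l a 0 = 0" by simp
  have "l (0 + 0) x = l 0 x + l 0 x" using laws by blast
  then show "l 0 x = 0" by simp
  have "r (0 + 0) s = r 0 s + r 0 s" using laws by blast
  then show "r 0 s = 0" by simp
  have "r x (0 + 0) = r x 0 + r x 0" using laws by blast
  then show "r x 0 = 0" by simp
  show "l 1 x = x" "r x 1 = x" using laws by blast+
qed

fun top_right :: "('r, 'm, 'n, 's) mat2 \<Rightarrow> 'm" where
  "top_right (Mat r m n s) = m"

fun bottom_left :: "('r, 'm, 'n, 's) mat2 \<Rightarrow> 'n" where
  "bottom_left (Mat r m n s) = n"

lemma additive_map_zero:
  fixes f :: "('r::group_add, 'm::group_add, 'n::group_add, 's::group_add) mat2 \<Rightarrow>
              ('r2::group_add, 'm2::group_add, 'n2::group_add, 's2::group_add) mat2"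
  assumes "\<And>x y. f (madd x y) = madd (f x) (f y)"
  shows "f (Mat 0 0 0 0) = Mat 0 0 0 0"
proof -
  have "f (Mat 0 0 0 0) = madd (f (Mat 0 0 0 0)) (f (Mat 0 0 0 0))"
    using assms[of "Mat 0 0 0 0" "Mat 0 0 0 0"] by simp
  then show ?thesis by (cases "f (Mat 0 0 0 0)") (metis add.right_neutral add_left_cancel madd.simps mat2.inject)
qed

lemma proper_idempotent_diagonal:
  fixes lM :: "'r::ring_1 \<Rightarrow> 'm::ab_group_add \<Rightarrow> 'm" and rM :: "'m \<Rightarrow> 's::ring_1 \<Rightarrow> 'm"
    and lN :: "'s \<Rightarrow> 'n::ab_group_add \<Rightarrow> 'n" and rN :: "'n \<Rightarrow> 'r \<Rightarrow> 'n"
  assumes "only_trivial_idempotents TYPE('r)" and "only_trivial_idempotents TYPE('s)"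
    and M: "bimodule lM rM" and N: "bimodule lN rN"
    and idem: "mmul lM rM lN rN e e = e"
    and nonzero: "e \<noteq> Mat 0 0 0 0" and nonone: "e \<noteq> mone"
  shows "(\<exists>x y. e = Mat 0 x y 1) \<or> (\<exists>x y. e = Mat 1 x y 0)"
proof -
  note laws = bimodule_zero_one_laws[OF M] bimodule_zero_one_laws[OF N]
  obtain a x y b where e: "e = Mat a x y b" by (cases e)
  have eqs: "a * a = a" "b * b = b" "lM a x + rM x b = x" "rN y a + lN b y = y"
    using idem e by simp_all
  have "a = 0 \<or> a = 1" "b = 0 \<or> b = 1"
    using eqs(1,2) assms(1,2) unfolding only_trivial_idempotents_def by blast+
  moreover have "\<not> (a = 0 \<and> b = 0)"
  proof
    assume "a = 0 \<and> b = 0"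
    then have "x = 0" "y = 0" using eqs laws by simp_all
    with \<open>a = 0 \<and> b = 0\<close> nonzero e show False by simp
  qed
  moreover have "\<not> (a = 1 \<and> b = 1)"
  proof
    assume "a = 1 \<and> b = 1"
    then have "x + x = x" "y + y = y" using eqs laws by simp_all
    then have "x = 0" "y = 0" by simp_all
    with \<open>a = 1 \<and> b = 1\<close> nonone e show False by (simp add: mone_def)
  qed
  ultimately show ?thesis using e by blast
qed

lemma absorb_diagonal_0_1:
  fixes lM :: "'r::ring_1 \<Rightarrow> 'm::ab_group_add \<Rightarrow> 'm" and rM :: "'m \<Rightarrow> 's::ring_1 \<Rightarrow> 'm"
    and lN :: "'s \<Rightarrow> 'n::ab_group_add \<Rightarrow> 'n" and rN :: "'n \<Rightarrow> 'r \<Rightarrow> 'n"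
  assumes M: "bimodule lM rM" and N: "bimodule lN rN"
    and e: "e = Mat 0 x0 y0 1"
  shows "\<lbrakk>mmul lM rM lN rN u e = u; mmul lM rM lN rN e u = e\<rbrakk>
           \<Longrightarrow> u = Mat 0 (top_right u) y0 1"
    and "\<lbrakk>mmul lM rM lN rN u e = e; mmul lM rM lN rN e u = u\<rbrakk>
           \<Longrightarrow> u = Mat 0 x0 (bottom_left u) 1"
  using e by (cases u; auto simp: bimodule_zero_one_laws[OF M] bimodule_zero_one_laws[OF N])+

lemma absorb_diagonal_1_0:
  fixes lM :: "'r::ring_1 \<Rightarrow> 'm::ab_group_add \<Rightarrow> 'm" and rM :: "'m \<Rightarrow> 's::ring_1 \<Rightarrow> 'm"
    and lN :: "'s \<Rightarrow> 'n::ab_group_add \<Rightarrow> 'n" and rN :: "'n \<Rightarrow> 'r \<Rightarrow> 'n"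
  assumes M: "bimodule lM rM" and N: "bimodule lN rN"
    and e: "e = Mat 1 x0 y0 0"
  shows "\<lbrakk>mmul lM rM lN rN u e = u; mmul lM rM lN rN e u = e\<rbrakk>
           \<Longrightarrow> u = Mat 1 x0 (bottom_left u) 0"
    and "\<lbrakk>mmul lM rM lN rN u e = e; mmul lM rM lN rN e u = u\<rbrakk>
           \<Longrightarrow> u = Mat 1 (top_right u) y0 0"
  using e by (cases u; auto simp: bimodule_zero_one_laws[OF M] bimodule_zero_one_laws[OF N])+

lemma corner_idempotent_relations:
  fixes lM :: "'r::ring_1 \<Rightarrow> 'm::ab_group_add \<Rightarrow> 'm" and rM :: "'m \<Rightarrow> 's::ring_1 \<Rightarrow> 'm"
    and lN :: "'s \<Rightarrow> 'n::ab_group_add \<Rightarrow> 'n" and rN :: "'n \<Rightarrow> 'r \<Rightarrow> 'n"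
  assumes M: "bimodule lM rM" and N: "bimodule lN rN"
  defines "E \<equiv> Mat 0 0 0 1"
  shows "mmul lM rM lN rN E E = E"
    and "mmul lM rM lN rN (Mat 0 m 0 1) E = Mat 0 m 0 1" "mmul lM rM lN rN E (Mat 0 m 0 1) = E"
    and "mmul lM rM lN rN (Mat 0 0 n 1) E = E" "mmul lM rM lN rN E (Mat 0 0 n 1) = Mat 0 0 n 1"
  by (simp_all add: E_def bimodule_zero_one_laws[OF M] bimodule_zero_one_laws[OF N])

theorem corollary4p6:
  fixes lM :: "'r::ring_1 \<Rightarrow> 'm::ab_group_add \<Rightarrow> 'm" and rM :: "'m \<Rightarrow> 's::ring_1 \<Rightarrow> 'm"
    and lN :: "'s \<Rightarrow> 'n::ab_group_add \<Rightarrow> 'n" and rN :: "'n \<Rightarrow> 'r \<Rightarrow> 'n"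
    and lM' :: "'r2::ring_1 \<Rightarrow> 'm2::ab_group_add \<Rightarrow> 'm2" and rM' :: "'m2 \<Rightarrow> 's2::ring_1 \<Rightarrow> 'm2"
    and lN' :: "'s2 \<Rightarrow> 'n2::ab_group_add \<Rightarrow> 'n2" and rN' :: "'n2 \<Rightarrow> 'r2 \<Rightarrow> 'n2"
    and \<phi> :: "('r, 'm, 'n, 's) mat2 \<Rightarrow> ('r2, 'm2, 'n2, 's2) mat2"
  assumes "only_trivial_idempotents TYPE('r)" and "only_trivial_idempotents TYPE('s)"
    and "only_trivial_idempotents TYPE('r2)" and "only_trivial_idempotents TYPE('s2)"
    and "bimodule lM rM" and "bimodule lN rN"
    and "bimodule lM' rM'" and "bimodule lN' rN'"
    and "ring_iso_mat lM rM lN rN lM' rM' lN' rN' \<phi>"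
  shows "(\<exists>(h1 :: 'm \<Rightarrow> 'm2) (p1 :: 'n \<Rightarrow> 'n2). \<forall>m n.
            \<phi> (Mat 0 m 0 1) = Mat 0 (h1 m) (p1 0) 1 \<and>
            \<phi> (Mat 0 0 n 1) = Mat 0 (h1 0) (p1 n) 1)
       \<or> (\<exists>(h2 :: 'n \<Rightarrow> 'm2) (p2 :: 'm \<Rightarrow> 'n2). \<forall>m n.
            \<phi> (Mat 0 m 0 1) = Mat 1 (h2 0) (p2 m) 0 \<and>
            \<phi> (Mat 0 0 n 1) = Mat 1 (h2 n) (p2 0) 0)"
proof -
  let ?E = "Mat 0 0 0 1 :: ('r, 'm, 'n, 's) mat2"
  have inj: "inj \<phi>" and add: "\<And>x y. \<phi> (madd x y) = madd (\<phi> x) (\<phi> y)"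
    and mul: "\<And>x y. \<phi> (mmul lM rM lN rN x y) = mmul lM' rM' lN' rN' (\<phi> x) (\<phi> y)"
    and one: "\<phi> mone = mone"
    using assms(9) unfolding ring_iso_mat_def bij_def by blast+
  text \<open>The relations between E, X m and Y n hold in T' for their images under phi.\<close>
  note rel = corner_idempotent_relations[OF assms(5,6), THEN arg_cong[where f = \<phi>],
      unfolded mul]
  have "\<phi> ?E \<noteq> \<phi> (Mat 0 0 0 0)" "\<phi> ?E \<noteq> \<phi> mone"
    using inj by (auto dest: injD simp: mone_def)
  then have "\<phi> ?E \<noteq> Mat 0 0 0 0" "\<phi> ?E \<noteq> mone"
    using additive_map_zero[of \<phi>, OF add] one by simp_all
  then consider (II') x0 y0 where "\<phi> ?E = Mat 0 x0 y0 1" | (II'') x0 y0 where "\<phi> ?E = Mat 1 x0 y0 0"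
    using proper_idempotent_diagonal[OF assms(3,4,7,8) rel(1)] by blast
  text \<open>Since E = X 0 = Y 0, the constant entries of phi (X m) and phi (Y n) are the values
    of the respective maps at 0.\<close>
  then show ?thesis
  proof cases
    case II'
    note shape = absorb_diagonal_0_1[OF assms(7,8) II']
    have "\<phi> (Mat 0 m 0 1) = Mat 0 (top_right (\<phi> (Mat 0 m 0 1))) (bottom_left (\<phi> ?E)) 1"
      "\<phi> (Mat 0 0 n 1) = Mat 0 (top_right (\<phi> ?E)) (bottom_left (\<phi> (Mat 0 0 n 1))) 1"
      for m n using shape(1)[OF rel(2,3)] shape(2)[OF rel(4,5)] II' by simp_all
    then show ?thesis
      by (intro disjI1 exI[of _ "\<lambda>m. top_right (\<phi> (Mat 0 m 0 1))"]
          exI[of _ "\<lambda>n. bottom_left (\<phi> (Mat 0 0 n 1))"]) simp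
  next
    case II''
    note shape = absorb_diagonal_1_0[OF assms(7,8) II'']
    have "\<phi> (Mat 0 m 0 1) = Mat 1 (top_right (\<phi> ?E)) (bottom_left (\<phi> (Mat 0 m 0 1))) 0"
      "\<phi> (Mat 0 0 n 1) = Mat 1 (top_right (\<phi> (Mat 0 0 n 1))) (bottom_left (\<phi> ?E)) 0"
      for m n using shape(1)[OF rel(2,3)] shape(2)[OF rel(4,5)] II'' by simp_all
    then show ?thesis
      by (intro disjI2 exI[of _ "\<lambda>n. top_right (\<phi> (Mat 0 0 n 1))"]
          exI[of _ "\<lambda>m. bottom_left (\<phi> (Mat 0 m 0 1))"]) simp
  qed
qed

end
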